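(* For integers $n\ge1$ and $0\le p\le n-1$, $$s(n,n-p)=\frac{(n-1)!}{(n-p-1)!}\sum_{0\le k_1,\dots,k_p\le p}\binom{n+K-1}{K}\frac{K!}{k_1!\cdots k_p!}\,\delta_{p,\sum_{m=1}^p mk_m}\prod_{m=1}^{p}\left(\frac{-1}{(m+1)!}\right)^{k_m},\qquad K=k_1+\cdots+k_p .$$
   Context: $s(n,k)$ denotes the signed Stirling numbers of the first kind, defined by $x(x-1)\cdots(x-n+1)=\sum_{k}s(n,k)x^k$. $\delta$ is the Kronecker delta; for $p=0$ the sum is over the empty tuple and equals $1$. *)

theory Defs
  imports "HOL-Computational_Algebra.Polynomial" "HOL-Library.FuncSet" Complex_Main
begin

definition stirling1_signed :: "nat \<Rightarrow> nat \<Rightarrow> int" where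
  "stirling1_signed n k = coeff (\<Prod>i<n. [:- of_nat i, 1:]) k"

end

theory Submission
  imports Defs "HOL-Computational_Algebra.Formal_Power_Series"
begin

text \<open>
  Let F(x) = x / (e^x - 1). Its Riccati equation x F' = F (1 - x - F) makes the coefficients
  of F^n satisfy the recurrence of the Stirling numbers, so that
  s(n, n - p) = (n - 1)...(n - p) [x^p] F^n. Since 1/F = 1 + sum_{m>=1} x^m/(m + 1)!, cutting 1/F
  off after x^p leaves [x^p] F^n unchanged, and expanding (1 - sum_{m=1..p} c_m x^m)^(-n) one
  monomial at a time with the negative binomial series produces the multinomial sum, where
  c_m = -1/(m + 1)!.
\<close>

unbundle fps_syntax

lemma stirling1_signed_Suc_Suc:
  "stirling1_signed (Suc n) (Suc k) = stirling1_signed n k - int n * stirling1_signed n (Suc k)"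
  by (simp add: stirling1_signed_def mult_pCons_right algebra_simps)

lemma stirling1_signed_Suc_0 [simp]: "stirling1_signed (Suc n) 0 = 0"
  by (induction n) (simp_all add: stirling1_signed_def mult_pCons_right)

lemma stirling1_signed_eq_0: "n < k \<Longrightarrow> stirling1_signed n k = 0"
proof (induction n arbitrary: k)
  case 0
  then show ?case by (simp add: stirling1_signed_def)
next
  case (Suc n)
  then obtain j where "k = Suc j" "n < j" by (cases k) auto
  with Suc.IH show ?case by (simp add: stirling1_signed_Suc_Suc)
qed

lemma stirling1_signed_diag [simp]: "stirling1_signed n n = 1"
  by (induction n)
    (simp_all add: stirling1_signed_def[of 0] stirling1_signed_Suc_Suc stirling1_signed_eq_0)

lemma binomial_mult_fact_eq_pochhammer:
  "of_nat ((n + k - 1) choose k) * fact k = (pochhammer (of_nat n) k :: 'a::field_char_0)"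
proof (cases n)
  case 0
  then show ?thesis by (cases k) (simp_all add: pochhammer_0_left)
next
  case (Suc m)
  then show ?thesis
    by (simp add: binomial_gbinomial gbinomial_pochhammer' add.commute)
qed

lemma prod_lessThan_diff_eq_fact_div_fact:
  "p \<le> m \<Longrightarrow> (\<Prod>i<p. of_nat m - of_nat i) = (fact m / fact (m - p) :: 'a::field_char_0)"
  by (simp add: fact_binomial[symmetric] binomial_gbinomial gbinomial_mult_fact atLeast0LessThan)

lemma fps_cutoff_mult_cong:
  assumes "fps_cutoff n f = fps_cutoff n f'" "fps_cutoff n g = fps_cutoff n g'"
  shows "fps_cutoff n (f * g) = fps_cutoff n (f' * g' :: 'a::comm_semiring_1 fps)"
proof -
  have "(f * g) $ k = (f' * g') $ k" if "k < n" for k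
  proof -
    have "(f * g) $ k = (fps_cutoff n f * fps_cutoff n g) $ k"
      using that by (simp add: fps_cutoff_left_mult_nth fps_cutoff_right_mult_nth)
    also have "\<dots> = (f' * g') $ k"
      using that by (simp add: assms fps_cutoff_left_mult_nth fps_cutoff_right_mult_nth)
    finally show ?thesis .
  qed
  then show ?thesis by (simp add: fps_cutoff_eq_fps_cutoff_iff)
qed

lemma fps_cutoff_power_cong:
  "fps_cutoff n f = fps_cutoff n g \<Longrightarrow>
    fps_cutoff n (f ^ k) = fps_cutoff n (g ^ k :: 'a::comm_semiring_1 fps)"
  by (induction k) (simp_all add: fps_cutoff_mult_cong[of n f g])

lemma fps_cutoff_inverse_cong:
  assumes fg: "fps_cutoff n f = fps_cutoff n g" and f0: "f $ 0 \<noteq> 0"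
  shows "fps_cutoff n (inverse f) = fps_cutoff n (inverse g :: 'a::field fps)"
proof (cases "n = 0")
  case False
  then have g0: "g $ 0 \<noteq> 0"
    using f0 fg unfolding fps_cutoff_eq_fps_cutoff_iff by auto
  have "inverse f * g * inverse g = inverse f"
    using g0 by (simp add: mult.assoc inverse_mult_eq_1')
  then have "fps_cutoff n (inverse f) = fps_cutoff n (inverse f * g * inverse g)"
    by (simp only:)
  also have "\<dots> = fps_cutoff n (inverse f * f * inverse g)"
    by (rule fps_cutoff_mult_cong[OF fps_cutoff_mult_cong[OF refl fg[symmetric]] refl])
  also have "\<dots> = fps_cutoff n (inverse g)"
    using f0 by (simp add: inverse_mult_eq_1)
  finally show ?thesis .
qed simp

lemma fps_cutoff_inverse_one_minus_power:
  fixes z :: "'a::field_char_0 fps"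
  assumes z0: "z $ 0 = 0"
  shows "fps_cutoff (Suc N) (inverse (1 - z) ^ n) =
    fps_cutoff (Suc N) (\<Sum>i=0..N. fps_const (pochhammer (of_nat n) i / fact i) * z ^ i)"
proof -
  have mz0: "(- z) $ 0 = 0" using z0 by simp
  have "inverse (1 - z) ^ n = inverse (((1 + fps_X) oo (- z)) ^ n)"
    using mz0 by (simp add: fps_compose_add_distrib fps_inverse_power)
  also have "\<dots> = inverse ((1 + fps_X) ^ n) oo (- z)"
    using mz0 by (simp add: fps_compose_power fps_inverse_compose fps_power_zeroth)
  also have "\<dots> = fps_binomial (- of_nat n) oo (- z)"
    by (simp add: fps_binomial_minus_of_nat)
  finally have binomial: "inverse (1 - z) ^ n = fps_binomial (- of_nat n) oo (- z)" .
  have "inverse (1 - z) ^ n $ q = (\<Sum>i=0..N. pochhammer (of_nat n) i / fact i * z ^ i $ q)"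
    if qN: "q \<le> N" for q
  proof -
    have "inverse (1 - z) ^ n $ q = (\<Sum>i=0..q. (- of_nat n gchoose i) * (- z) ^ i $ q)"
      by (simp add: binomial fps_compose_nth)
    also have "\<dots> = (\<Sum>i=0..q. pochhammer (of_nat n) i / fact i * z ^ i $ q)"
    proof (rule sum.cong[OF refl])
      fix i
      have "(- z) ^ i $ q = (- 1) ^ i * z ^ i $ q"
        unfolding power_minus[of z] by (cases "even i") simp_all
      then show "(- of_nat n gchoose i) * (- z) ^ i $ q =
          pochhammer (of_nat n) i / fact i * z ^ i $ q"
        by (simp add: gbinomial_pochhammer power_mult_distrib[symmetric])
    qed
    also have "\<dots> = (\<Sum>i=0..N. pochhammer (of_nat n) i / fact i * z ^ i $ q)"
      using qN startsby_zero_power_prefix[OF z0] by (intro sum.mono_neutral_left) auto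
    finally show ?thesis .
  qed
  then show ?thesis
    by (simp add: fps_cutoff_eq_fps_cutoff_iff fps_sum_nth)
qed

text \<open>Factor \<open>1 - h - c x\<^sup>j = (1 - h) (1 - c x\<^sup>j / (1 - h))\<close> and expand the second factor
  by the negative binomial series.\<close>

lemma fps_nth_inverse_power_minus_monomial:
  fixes h :: "'a::field_char_0 fps"
  assumes h0: "h $ 0 = 0" and j: "j \<ge> 1" and pN: "p \<le> N"
  shows "inverse (1 - h - fps_const c * fps_X ^ j) ^ n $ p =
    (\<Sum>r=0..N. pochhammer (of_nat n) r / fact r * c ^ r *
        (if j * r \<le> p then inverse (1 - h) ^ (n + r) $ (p - j * r) else 0))"
proof -
  define w where "w = inverse (1 - h)"
  define z where "z = fps_const c * fps_X ^ j * w"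
  let ?expansion = "\<Sum>r=0..N. fps_const (pochhammer (of_nat n) r / fact r) * fps_const (c ^ r) *
    (fps_X ^ (j * r) * w ^ (n + r))"
  have z0: "z $ 0 = 0" using j by (simp add: z_def fps_mult_nth)
  have "(1 - h) * (1 - z) = (1 - h) - fps_const c * fps_X ^ j * ((1 - h) * w)"
    by (simp add: z_def algebra_simps)
  also have "(1 - h) * w = 1" using h0 by (simp add: w_def inverse_mult_eq_1')
  finally have "1 - h - fps_const c * fps_X ^ j = (1 - h) * (1 - z)"
    by simp
  then have "inverse (1 - h - fps_const c * fps_X ^ j) ^ n = w ^ n * inverse (1 - z) ^ n"
    by (simp add: fps_inverse_mult w_def power_mult_distrib)
  also have "fps_cutoff (Suc N) \<dots> =
      fps_cutoff (Suc N) (w ^ n * (\<Sum>r=0..N. fps_const (pochhammer (of_nat n) r / fact r) * z ^ r))"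
    by (rule fps_cutoff_mult_cong[OF refl fps_cutoff_inverse_one_minus_power[OF z0]])
  also have "w ^ n * (\<Sum>r=0..N. fps_const (pochhammer (of_nat n) r / fact r) * z ^ r) = ?expansion"
    unfolding sum_distrib_left
    by (rule sum.cong[OF refl])
      (simp add: z_def power_mult_distrib power_add power_mult[symmetric] mult_ac del: fps_const_mult)
  finally have "inverse (1 - h - fps_const c * fps_X ^ j) ^ n $ p = ?expansion $ p"
    using pN by (simp add: fps_cutoff_eq_fps_cutoff_iff)
  then show ?thesis
    by (simp add: fps_sum_nth fps_X_power_mult_nth w_def) (auto intro!: sum.cong)
qed

definition neg_multinomial_term ::
    "(nat \<Rightarrow> 'a::field_char_0) \<Rightarrow> nat set \<Rightarrow> nat \<Rightarrow> nat \<Rightarrow> (nat \<Rightarrow> nat) \<Rightarrow> 'a" where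
  "neg_multinomial_term c S n p k =
    (if (\<Sum>m\<in>S. m * k m) = p
     then pochhammer (of_nat n) (\<Sum>m\<in>S. k m) * (\<Prod>m\<in>S. c m ^ k m / fact (k m)) else 0)"

lemma neg_multinomial_term_insert:
  assumes "finite S" "j \<notin> S"
  shows "neg_multinomial_term c (insert j S) n p (k(j := r)) =
    pochhammer (of_nat n) r / fact r * c j ^ r *
      (if j * r \<le> p then neg_multinomial_term c S (n + r) (p - j * r) k else 0)"
proof -
  have "(\<Sum>m\<in>S. m * (k(j := r)) m) = (\<Sum>m\<in>S. m * k m)"
    "(\<Sum>m\<in>S. (k(j := r)) m) = (\<Sum>m\<in>S. k m)"
    "(\<Prod>m\<in>S. c m ^ (k(j := r)) m / fact ((k(j := r)) m)) =
      (\<Prod>m\<in>S. c m ^ k m / fact (k m))"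
    using assms(2) by (auto intro!: sum.cong prod.cong)
  moreover have "pochhammer (of_nat n) (r + (\<Sum>m\<in>S. k m)) =
      pochhammer (of_nat n) r * pochhammer (of_nat (n + r) :: 'a) (\<Sum>m\<in>S. k m)"
    by (simp add: pochhammer_product')
  ultimately show ?thesis
    using assms by (auto simp: neg_multinomial_term_def)
qed

lemma sum_PiE_neg_multinomial_term_insert:
  assumes "finite S" "j \<notin> S"
  shows "(\<Sum>k\<in>PiE (insert j S) (\<lambda>_. {0..N}). neg_multinomial_term c (insert j S) n p k) =
    (\<Sum>r=0..N. pochhammer (of_nat n) r / fact r * c j ^ r *
      (if j * r \<le> p
       then \<Sum>k\<in>PiE S (\<lambda>_. {0..N}). neg_multinomial_term c S (n + r) (p - j * r) k else 0))"
proof -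
  have "(\<Sum>k\<in>PiE (insert j S) (\<lambda>_. {0..N}). neg_multinomial_term c (insert j S) n p k) =
      (\<Sum>r=0..N. \<Sum>k\<in>PiE S (\<lambda>_. {0..N}).
         neg_multinomial_term c (insert j S) n p (k(j := r)))"
    unfolding PiE_insert_eq
    by (subst sum.reindex[OF inj_combinator[OF assms(2)]])
      (simp add: case_prod_unfold sum.cartesian_product)
  also have "\<dots> = (\<Sum>r=0..N. pochhammer (of_nat n) r / fact r * c j ^ r *
      (if j * r \<le> p
       then \<Sum>k\<in>PiE S (\<lambda>_. {0..N}). neg_multinomial_term c S (n + r) (p - j * r) k else 0))"
  proof (rule sum.cong[OF refl])
    fix r
    show "(\<Sum>k\<in>PiE S (\<lambda>_. {0..N}).
          neg_multinomial_term c (insert j S) n p (k(j := r))) =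
        pochhammer (of_nat n) r / fact r * c j ^ r *
        (if j * r \<le> p
         then \<Sum>k\<in>PiE S (\<lambda>_. {0..N}). neg_multinomial_term c S (n + r) (p - j * r) k else 0)"
      by (cases "j * r \<le> p")
        (simp_all add: neg_multinomial_term_insert[OF assms] sum_distrib_left)
  qed
  finally show ?thesis .
qed

lemma fps_nth_inverse_one_minus_monomial_sum_power:
  fixes c :: "nat \<Rightarrow> 'a::field_char_0"
  assumes "finite S" "0 \<notin> S" "p \<le> N"
  shows "inverse (1 - (\<Sum>m\<in>S. fps_const (c m) * fps_X ^ m)) ^ n $ p =
    (\<Sum>k\<in>PiE S (\<lambda>_. {0..N}). neg_multinomial_term c S n p k)"
  using assms
proof (induction S arbitrary: n p rule: finite_induct)
  case empty
  then show ?case by (simp add: neg_multinomial_term_def fps_power_zeroth)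
next
  case (insert j S)
  let ?G = "\<lambda>S. \<Sum>m\<in>S. fps_const (c m) * fps_X ^ m"
  have j: "j \<ge> 1" and S0: "0 \<notin> S" using insert.prems by auto
  have "inverse (1 - ?G (insert j S)) ^ n $ p =
      inverse (1 - ?G S - fps_const (c j) * fps_X ^ j) ^ n $ p"
    using insert.hyps by (simp add: algebra_simps)
  also have "\<dots> = (\<Sum>r=0..N. pochhammer (of_nat n) r / fact r * c j ^ r *
      (if j * r \<le> p then inverse (1 - ?G S) ^ (n + r) $ (p - j * r) else 0))"
    using S0 j insert.prems
    by (intro fps_nth_inverse_power_minus_monomial) (auto simp: fps_sum_nth intro!: sum.neutral)
  also have "\<dots> =
      (\<Sum>k\<in>PiE (insert j S) (\<lambda>_. {0..N}). neg_multinomial_term c (insert j S) n p k)"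
    unfolding sum_PiE_neg_multinomial_term_insert[OF insert.hyps]
    using insert.IH S0 insert.prems by (intro sum.cong refl) auto
  finally show ?case .
qed

definition fps_expm1_over_X :: "'a::field_char_0 fps" where
  "fps_expm1_over_X = Abs_fps (\<lambda>m. 1 / fact (m + 1))"

definition fps_X_over_expm1 :: "'a::field_char_0 fps" where
  "fps_X_over_expm1 = inverse fps_expm1_over_X"

lemma fps_X_over_expm1_nth_0: "fps_X_over_expm1 $ 0 = 1"
  by (simp add: fps_X_over_expm1_def fps_expm1_over_X_def)

lemma fps_expm1_over_X_deriv:
  "fps_X * fps_deriv fps_expm1_over_X =
    1 - fps_expm1_over_X + fps_X * (fps_expm1_over_X :: 'a::field_char_0 fps)"
proof (rule fps_ext)
  fix p
  show "(fps_X * fps_deriv fps_expm1_over_X) $ p =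
      (1 - fps_expm1_over_X + fps_X * fps_expm1_over_X :: 'a fps) $ p"
  proof (cases p)
    case (Suc q)
    have "(of_nat (Suc q) / fact (Suc q + 1) :: 'a) = 1 / fact (Suc q) - 1 / fact (Suc q + 1)"
      by (simp add: divide_simps del: of_nat_Suc) (simp add: algebra_simps)
    then show ?thesis using Suc by (simp add: fps_expm1_over_X_def)
  qed (simp add: fps_expm1_over_X_def)
qed

lemma fps_X_over_expm1_deriv:
  "fps_X * fps_deriv fps_X_over_expm1 =
    fps_X_over_expm1 * (1 - fps_X - (fps_X_over_expm1 :: 'a::field_char_0 fps))"
proof -
  let ?E = "fps_expm1_over_X :: 'a fps" and ?F = "fps_X_over_expm1 :: 'a fps"
  have E0: "?E $ 0 \<noteq> 0" by (simp add: fps_expm1_over_X_def)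
  have EF: "?E * ?F = 1"
    unfolding fps_X_over_expm1_def using E0 by (rule inverse_mult_eq_1')
  have "fps_X * fps_deriv ?F = - ((fps_X * fps_deriv ?E) * ?F ^ 2)"
    unfolding fps_X_over_expm1_def using E0 by (simp add: fps_inverse_deriv)
  also have "\<dots> = - ((1 - ?E + fps_X * ?E) * ?F ^ 2)"
    by (simp add: fps_expm1_over_X_deriv)
  also have "\<dots> = - (?F ^ 2 - (?E * ?F) * ?F + fps_X * (?E * ?F) * ?F)"
    by (simp add: algebra_simps power2_eq_square)
  also have "\<dots> = ?F * (1 - fps_X - ?F)"
    unfolding EF by (simp add: algebra_simps power2_eq_square)
  finally show ?thesis .
qed

lemma fps_X_over_expm1_power_deriv:
  "fps_X * fps_deriv (fps_X_over_expm1 ^ n) =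
    of_nat n * fps_X_over_expm1 ^ n * (1 - fps_X - (fps_X_over_expm1 :: 'a::field_char_0 fps))"
proof (induction n)
  case (Suc n)
  let ?F = "fps_X_over_expm1 :: 'a fps"
  have "fps_X * fps_deriv (?F ^ Suc n) =
      (fps_X * fps_deriv (?F ^ n)) * ?F + ?F ^ n * (fps_X * fps_deriv ?F)"
    by (simp add: algebra_simps)
  also have "\<dots> = of_nat (Suc n) * ?F ^ Suc n * (1 - fps_X - ?F)"
    unfolding Suc.IH fps_X_over_expm1_deriv by (simp add: algebra_simps)
  finally show ?case .
qed simp

lemma fps_X_over_expm1_power_nth_Suc:
  "of_nat n * fps_X_over_expm1 ^ (n + 1) $ Suc q + of_nat n * fps_X_over_expm1 ^ n $ q =
    (of_nat n - of_nat (Suc q)) * (fps_X_over_expm1 ^ n $ Suc q :: 'a::field_char_0)"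
proof -
  let ?F = "fps_X_over_expm1 :: 'a fps"
  have "fps_X * fps_deriv (?F ^ n) =
      fps_const (of_nat n) * (?F ^ n - fps_X * ?F ^ n - ?F ^ (n + 1))"
    by (simp add: fps_X_over_expm1_power_deriv fps_of_nat algebra_simps)
  from arg_cong[OF this, of "\<lambda>f. f $ Suc q"] show ?thesis
    by (simp del: of_nat_Suc power_Suc) (simp add: algebra_simps del: of_nat_Suc power_Suc)
qed

lemma stirling1_signed_eq_fps_nth:
  "p \<le> n \<Longrightarrow> of_int (stirling1_signed n (n - p)) =
    (\<Prod>i<p. of_nat n - 1 - of_nat i) * (fps_X_over_expm1 ^ n $ p :: 'a::field_char_0)"
proof (induction n arbitrary: p)
  case 0
  then show ?case by (simp add: fps_X_over_expm1_nth_0)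
next
  case (Suc n)
  let ?F = "fps_X_over_expm1 :: 'a fps"
  consider "p = 0" | "p = Suc n" | q where "p = Suc q" "q < n"
    using Suc.prems by (metis Suc_le_mono le_neq_implies_less not0_implies_Suc)
  then show ?case
  proof cases
    case 1
    then show ?thesis by (simp add: fps_power_zeroth fps_X_over_expm1_nth_0)
  next
    case 2
    then have "(\<Prod>i<p. of_nat (Suc n) - 1 - of_nat i :: 'a) = 0"
      by (auto simp: prod_zero_iff intro!: bexI[of _ n])
    with 2 show ?thesis by simp
  next
    case 3
    define falling where "falling = (\<Prod>i<q. of_nat n - 1 - of_nat i :: 'a)"
    have falling_Suc: "(\<Prod>i<p. of_nat (Suc n) - 1 - of_nat i :: 'a) = of_nat n * falling"
      unfolding 3 falling_def prod.lessThan_Suc_shift by (simp add: algebra_simps)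
    have "(\<Prod>i<p. of_nat n - 1 - of_nat i :: 'a) = falling * (of_nat n - of_nat p)"
      unfolding 3 falling_def by (simp add: algebra_simps)
    then have IH_p:
        "of_int (stirling1_signed n (n - p)) = falling * (of_nat n - of_nat p) * ?F ^ n $ p"
      using Suc.IH[of p] 3 by simp
    have IH_q: "of_int (stirling1_signed n (n - q)) = falling * ?F ^ n $ q"
      using Suc.IH[of q] 3 by (simp add: falling_def)
    have "stirling1_signed (Suc n) (Suc n - p) =
        stirling1_signed n (n - p) - int n * stirling1_signed n (n - q)"
      using 3 stirling1_signed_Suc_Suc[of n "n - p"] by (simp add: Suc_diff_Suc)
    then have "of_int (stirling1_signed (Suc n) (Suc n - p)) =
        of_int (stirling1_signed n (n - p)) -
        of_nat n * (of_int (stirling1_signed n (n - q)) :: 'a)"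
      by simp
    also have "\<dots> = falling * ((of_nat n - of_nat p) * ?F ^ n $ p - of_nat n * ?F ^ n $ q)"
      unfolding IH_p IH_q by (simp add: algebra_simps)
    also have "(of_nat n - of_nat p) * ?F ^ n $ p - of_nat n * ?F ^ n $ q =
        of_nat n * ?F ^ (n + 1) $ p"
      using fps_X_over_expm1_power_nth_Suc[of n q] unfolding 3
      by (simp only: diff_eq_eq) (rule sym)
    finally show ?thesis
      unfolding falling_Suc by (simp add: mult_ac del: power_Suc)
  qed
qed

lemma fps_X_over_expm1_power_nth:
  "fps_X_over_expm1 ^ n $ p =
    (\<Sum>k\<in>PiE {1..p} (\<lambda>_. {0..p}).
       neg_multinomial_term (\<lambda>m. -1 / fact (m + 1)) {1..p} n p k :: 'a::field_char_0)"
proof -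
  let ?G = "\<Sum>m\<in>{1..p}. fps_const (-1 / fact (m + 1)) * fps_X ^ m :: 'a fps"
  have "?G $ i = (if i \<in> {1..p} then -1 / fact (i + 1) else 0)" for i
    by (simp add: fps_sum_nth if_distrib sum.delta' cong: if_cong)
  then have "fps_cutoff (Suc p) (1 - ?G) = fps_cutoff (Suc p) fps_expm1_over_X"
    by (auto simp: fps_cutoff_eq_fps_cutoff_iff fps_expm1_over_X_def Suc_le_eq)
  then have "fps_cutoff (Suc p) (fps_X_over_expm1 ^ n) =
      fps_cutoff (Suc p) (inverse (1 - ?G) ^ n)"
    unfolding fps_X_over_expm1_def
    by (intro fps_cutoff_power_cong fps_cutoff_inverse_cong) (simp_all add: fps_expm1_over_X_def)
  then show ?thesis
    using fps_nth_inverse_one_minus_monomial_sum_power[of "{1..p}" p p _ n]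
    by (simp add: fps_cutoff_eq_fps_cutoff_iff)
qed

theorem mainTheorem6:
  fixes n p :: nat
  assumes "n \<ge> 1" and "p \<le> n - 1"
  shows "real_of_int (stirling1_signed n (n - p)) =
    fact (n - 1) / fact (n - p - 1) *
    (\<Sum>k\<in>PiE {1..p} (\<lambda>_. {0..p}).
       let K = (\<Sum>m\<in>{1..p}. k m) in
       real ((n + K - 1) choose K) * fact K / (\<Prod>m\<in>{1..p}. fact (k m))
       * (if p = (\<Sum>m\<in>{1..p}. m * k m) then 1 else 0)
       * (\<Prod>m\<in>{1..p}. (-1 / fact (m + 1)) ^ (k m)))"
proof -
  have "real_of_int (stirling1_signed n (n - p)) =
      (\<Prod>i<p. real n - 1 - real i) * fps_X_over_expm1 ^ n $ p"
    using assms by (intro stirling1_signed_eq_fps_nth) simp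
  also have "(\<Prod>i<p. real n - 1 - real i) = fact (n - 1) / fact (n - p - 1)"
    using assms prod_lessThan_diff_eq_fact_div_fact[of p "n - 1"] by (simp add: of_nat_diff)
  also have "fps_X_over_expm1 ^ n $ p =
    (\<Sum>k\<in>PiE {1..p} (\<lambda>_. {0..p}).
       let K = (\<Sum>m\<in>{1..p}. k m) in
       real ((n + K - 1) choose K) * fact K / (\<Prod>m\<in>{1..p}. fact (k m))
       * (if p = (\<Sum>m\<in>{1..p}. m * k m) then 1 else 0)
       * (\<Prod>m\<in>{1..p}. (-1 / fact (m + 1)) ^ (k m)))"
    unfolding fps_X_over_expm1_power_nth
    by (intro sum.cong refl)
      (simp add: Let_def neg_multinomial_term_def prod_dividef
        flip: binomial_mult_fact_eq_pochhammer)
  finally show ?thesis .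
qed

end
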